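(* Let $\Theta\subset\mathbb{R}^m$ be a nonempty polyhedral convex set, $g:\mathbb{R}^n\to\mathbb{R}^m$ be $\mathcal C^2$-smooth, $\Gamma:=\{x:g(x)\in\Theta\}$, and suppose MSCQ holds at $\bar x\in\Gamma$. Let $\bar v\in N_\Gamma(\bar x)$, and define $P(\bar x,\bar v):=\{y\in\mathbb{R}^m:\bar v=\nabla g(\bar x)^*y,\ y\in N_\Theta(g(\bar x))\}$ and, for $v\in K_\Gamma(\bar x,\bar v)$, $S(v):=\operatorname{argmax}\{\langle v,\nabla^2\langle y,g\rangle(\bar x)v\rangle: y\in P(\bar x,\bar v)\}$. Then $S(v)\neq\emptyset$ for every $v\in K_\Gamma(\bar x,\bar v)$.
   Context: MSCQ at $\bar x\in\Gamma$: there are a neighborhood $U$ of $\bar x$ and $\kappa>0$ with $\operatorname{dist}(x;\Gamma)\le\kappa\operatorname{dist}(g(x);\Theta)$ for all $x\in U$. $N_\Gamma$ is the limiting (Mordukhovich) normal cone; $N_\Theta$ the convex normal cone. Tangent cone $T_\Omega(\bar x):=\{w:\exists t_k\downarrow0,w_k\to w,\bar x+t_kw_k\in\Omega\}$; critical cone $K_\Omega(\bar x,\bar v):=T_\Omega(\bar x)\cap\{\bar v\}^\perp$. $\nabla^2\langle y,g\rangle(\bar x)$ is the Hessian of $x\mapsto\langle y,g(x)\rangle$ at $\bar x$. *)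

theory Defs
  imports "HOL-Analysis.Analysis"
begin

definition regular_normal_cone :: "'a::euclidean_space set \<Rightarrow> 'a \<Rightarrow> 'a set" where
  "regular_normal_cone \<Omega> x =
     (if x \<in> \<Omega> then
        {v. \<forall>\<epsilon>>0. \<exists>\<delta>>0. \<forall>u\<in>\<Omega>. norm (u - x) < \<delta> \<longrightarrow> v \<bullet> (u - x) \<le> \<epsilon> * norm (u - x)}
      else {})"

definition limiting_normal_cone :: "'a::euclidean_space set \<Rightarrow> 'a \<Rightarrow> 'a set" where
  "limiting_normal_cone \<Omega> x =
     (if x \<in> \<Omega> then
        {v. \<exists>xs vs. (\<forall>k. xs k \<in> \<Omega> \<and> vs k \<in> regular_normal_cone \<Omega> (xs k))
                    \<and> xs \<longlonglongrightarrow> x \<and> vs \<longlonglongrightarrow> v}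
      else {})"

definition convex_normal_cone :: "'a::euclidean_space set \<Rightarrow> 'a \<Rightarrow> 'a set" where
  "convex_normal_cone \<Theta> z = (if z \<in> \<Theta> then {y. \<forall>w\<in>\<Theta>. y \<bullet> (w - z) \<le> 0} else {})"

definition tangent_cone :: "'a::euclidean_space set \<Rightarrow> 'a \<Rightarrow> 'a set" where
  "tangent_cone \<Omega> x =
     {w. \<exists>t ws. (\<forall>k. t k > 0 \<and> x + t k *\<^sub>R ws k \<in> \<Omega>) \<and> t \<longlonglongrightarrow> 0 \<and> ws \<longlonglongrightarrow> w}"

definition critical_cone :: "'a::euclidean_space set \<Rightarrow> 'a \<Rightarrow> 'a \<Rightarrow> 'a set" where
  "critical_cone \<Omega> x v = tangent_cone \<Omega> x \<inter> {w. v \<bullet> w = 0}"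

definition MSCQ :: "('a::euclidean_space \<Rightarrow> 'b::euclidean_space) \<Rightarrow> 'b set \<Rightarrow> 'a \<Rightarrow> bool" where
  "MSCQ g \<Theta> xbar \<longleftrightarrow>
     (\<exists>U \<kappa>. open U \<and> xbar \<in> U \<and> \<kappa> > 0 \<and>
        (\<forall>x\<in>U. infdist x {z. g z \<in> \<Theta>} \<le> \<kappa> * infdist (g x) \<Theta>))"

end

theory Submission
  imports Defs
begin

text \<open>Write \<open>\<Theta> = {z. a\<^sub>h \<bullet> z \<le> b\<^sub>h, h \<in> F}\<close> with \<open>F\<close> finite. By Farkas' lemma the
normal cone of \<open>\<Theta>\<close> at \<open>g xbar\<close> is the cone generated by the finitely many active \<open>a\<^sub>h\<close>, so
maximising the linear function \<open>q y = \<langle>v, \<nabla>\<^sup>2\<langle>y, g\<rangle>(xbar) v\<rangle>\<close> over \<open>P(xbar, vbar)\<close> is a linear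
program over a finitely generated cone. Such a program attains its supremum once it is feasible
and bounded, because the image of the cone under \<open>y \<mapsto> (\<nabla>g(xbar)\<^sup>* y, q y)\<close> is closed.

Feasibility: MSCQ yields, for a regular normal \<open>u\<close> to \<open>\<Gamma>\<close> at \<open>x\<close>, the estimate
\<open>\<langle>u, w\<rangle> \<le> \<kappa> |u| dist(\<nabla>g(x) w, T\<^sub>\<Theta>(g x))\<close>, which by duality means \<open>u = \<nabla>g(x)\<^sup>* y\<close> with
\<open>y \<in> N\<^sub>\<Theta>(g x)\<close> and \<open>|y| \<le> \<kappa> |u|\<close>; these bounded multipliers pass to the limit defining \<open>vbar\<close>.
Boundedness: if \<open>y \<in> N\<^sub>\<Theta>(g xbar)\<close> and \<open>\<nabla>g(xbar)\<^sup>* y = 0\<close>, a second-order Taylor expansion of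
\<open>\<langle>y, g\<rangle>\<close> along a tangent direction \<open>v\<close> of \<open>\<Gamma>\<close> gives \<open>\<langle>v, \<nabla>\<^sup>2\<langle>y, g\<rangle>(xbar) v\<rangle> \<le> 0\<close>.\<close>

section \<open>Polyhedral sets\<close>

lemma polyhedron_as_inequalities:
  fixes \<Theta> :: "'b::euclidean_space set"
  assumes "polyhedron \<Theta>"
  obtains F :: "'b set set" and a b where "finite F" "\<Theta> = {x. \<forall>h\<in>F. a h \<bullet> x \<le> b h}"
proof -
  obtain F where F: "finite F" "\<Theta> = \<Inter>F" "\<forall>h\<in>F. \<exists>a b. a \<noteq> 0 \<and> h = {x. a \<bullet> x \<le> b}"
    using assms unfolding polyhedron_def by blast
  then obtain a b where "\<forall>h\<in>F. h = {x. a h \<bullet> x \<le> b h}" by metis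
  then have "\<Theta> = {x. \<forall>h\<in>F. a h \<bullet> x \<le> b h}"
    using F(2) by blast
  with F(1) show ?thesis by (rule that)
qed

definition active_constraints :: "'c set \<Rightarrow> ('c \<Rightarrow> 'b::real_inner) \<Rightarrow> ('c \<Rightarrow> real) \<Rightarrow> 'b \<Rightarrow> 'c set"
  where "active_constraints F a b z = {h\<in>F. a h \<bullet> z = b h}"

definition linearized_cone :: "'c set \<Rightarrow> ('c \<Rightarrow> 'b::real_inner) \<Rightarrow> ('c \<Rightarrow> real) \<Rightarrow> 'b \<Rightarrow> 'b set"
  where "linearized_cone F a b z = {d. \<forall>h\<in>active_constraints F a b z. a h \<bullet> d \<le> 0}"

definition polar_cone :: "'b::real_inner set \<Rightarrow> 'b set"
  where "polar_cone K = {y. \<forall>d\<in>K. y \<bullet> d \<le> 0}"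

lemma polar_cone_eq_INT: "polar_cone K = (\<Inter>d\<in>K. {y. d \<bullet> y \<le> 0})"
  by (auto simp: polar_cone_def inner_commute)

lemma closed_polar_cone: "closed (polar_cone (K :: 'b::euclidean_space set))"
  unfolding polar_cone_eq_INT by (intro closed_INT ballI closed_halfspace_le)

lemma convex_polar_cone: "convex (polar_cone K)"
  unfolding polar_cone_eq_INT by (intro convex_INT ballI convex_halfspace_le)

lemma linearized_cone_eq_INT:
  "linearized_cone F a b z = (\<Inter>h\<in>active_constraints F a b z. {d. a h \<bullet> d \<le> 0})"
  by (auto simp: linearized_cone_def)

lemma closed_linearized_cone: "closed (linearized_cone F a b (z :: 'b::euclidean_space))"
  unfolding linearized_cone_eq_INT by (intro closed_INT ballI closed_halfspace_le)

lemma convex_cone_linearized_cone: "convex_cone (linearized_cone F a b z)"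
  unfolding convex_cone_iff linearized_cone_def
  by (simp add: inner_add_right add_nonpos_nonpos mult_nonneg_nonpos)

lemma eventually_ray_in_polyhedron:
  fixes a :: "'c \<Rightarrow> 'b::real_inner"
  assumes "finite F" and \<Theta>: "\<Theta> = {x. \<forall>h\<in>F. a h \<bullet> x \<le> b h}"
    and "z \<in> \<Theta>" and d: "d \<in> linearized_cone F a b z"
  shows "eventually (\<lambda>t. z + t *\<^sub>R d \<in> \<Theta>) (at_right 0)"
  unfolding \<Theta> mem_Collect_eq eventually_ball_finite_distrib[OF \<open>finite F\<close>]
proof
  fix h assume h: "h \<in> F"
  show "eventually (\<lambda>t. a h \<bullet> (z + t *\<^sub>R d) \<le> b h) (at_right 0)"
  proof (cases "a h \<bullet> z = b h")
    case True
    then have "a h \<bullet> d \<le> 0"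
      using d h by (auto simp: linearized_cone_def active_constraints_def)
    then show ?thesis
      using eventually_at_right_less[of 0]
      by (auto elim!: eventually_mono simp: inner_add_right True mult_nonneg_nonpos)
  next
    case False
    then have "a h \<bullet> z < b h" using \<open>z \<in> \<Theta>\<close> \<Theta> h by force
    moreover have "((\<lambda>t. a h \<bullet> (z + t *\<^sub>R d)) \<longlongrightarrow> a h \<bullet> z) (at_right 0)"
      by (auto intro!: tendsto_eq_intros)
    ultimately have "eventually (\<lambda>t. a h \<bullet> (z + t *\<^sub>R d) < b h) (at_right 0)"
      using order_tendstoD(2) by blast
    then show ?thesis by eventually_elim simp
  qed
qed

lemma polar_linearized_cone_subset_normal_cone:
  assumes \<Theta>: "\<Theta> = {x. \<forall>h\<in>F. a h \<bullet> x \<le> b h}" and z: "z \<in> \<Theta>"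
  shows "polar_cone (linearized_cone F a b z) \<subseteq> convex_normal_cone \<Theta> z"
proof -
  have "w - z \<in> linearized_cone F a b z" if "w \<in> \<Theta>" for w
    using that \<Theta> by (auto simp: linearized_cone_def active_constraints_def inner_diff_right)
  with z show ?thesis
    unfolding polar_cone_def convex_normal_cone_def by auto
qed

lemma separating_hyperplane_closed_convex_cone:
  fixes C :: "'a::euclidean_space set"
  assumes "closed C" "convex_cone C" "y \<notin> C"
  obtains c where "c \<bullet> y < 0" "\<And>x. x \<in> C \<Longrightarrow> 0 \<le> c \<bullet> x"
proof -
  obtain c e where ce: "c \<bullet> y < e" "\<forall>x\<in>C. e < c \<bullet> x"
    using separating_hyperplane_closed_point[of C y] assms by (auto simp: convex_cone_def)
  have "e < 0"
    using ce(2) assms(2) convex_cone_iff[of C] by force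
  have "0 \<le> c \<bullet> x" if "x \<in> C" for x
  proof (rule ccontr)
    assume "\<not> 0 \<le> c \<bullet> x"
    then have "(e / (c \<bullet> x)) *\<^sub>R x \<in> C" and "c \<bullet> ((e / (c \<bullet> x)) *\<^sub>R x) = e"
      using \<open>e < 0\<close> \<open>x \<in> C\<close> assms(2) by (auto simp: convex_cone_scaleR divide_nonpos_neg)
    with ce(2) show False by force
  qed
  moreover have "c \<bullet> y < 0"
    using ce(1) \<open>e < 0\<close> by linarith
  ultimately show ?thesis
    using that by blast
qed

lemma convex_cone_convex_normal_cone:
  "z \<in> \<Theta> \<Longrightarrow> convex_cone (convex_normal_cone \<Theta> z)"
  by (auto simp: convex_cone_iff convex_normal_cone_def inner_add_left
      intro: add_nonpos_nonpos mult_nonneg_nonpos)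

lemma closed_convex_normal_cone: "closed (convex_normal_cone \<Theta> (z :: 'b::euclidean_space))"
proof -
  have "convex_normal_cone \<Theta> z = (if z \<in> \<Theta> then \<Inter>w\<in>\<Theta>. {y. (w - z) \<bullet> y \<le> 0} else {})"
    by (auto simp: convex_normal_cone_def inner_commute)
  then show ?thesis
    by (simp add: closed_INT closed_halfspace_le)
qed

lemma convex_normal_cone_polyhedron:
  fixes a :: "'c \<Rightarrow> 'b::euclidean_space"
  assumes fin: "finite F" and \<Theta>: "\<Theta> = {x. \<forall>h\<in>F. a h \<bullet> x \<le> b h}" and z: "z \<in> \<Theta>"
  shows "convex_normal_cone \<Theta> z = convex_cone hull (a ` active_constraints F a b z)"
    (is "_ = ?C")
proof
  show "?C \<subseteq> convex_normal_cone \<Theta> z"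
  proof (rule hull_minimal)
    show "a ` active_constraints F a b z \<subseteq> convex_normal_cone \<Theta> z"
      using \<Theta> z by (auto simp: active_constraints_def convex_normal_cone_def inner_diff_right)
  qed (rule convex_cone_convex_normal_cone[OF z])
  show "convex_normal_cone \<Theta> z \<subseteq> ?C"
  proof
    fix y assume y: "y \<in> convex_normal_cone \<Theta> z"
    show "y \<in> ?C"
    proof (rule ccontr)
      assume "y \<notin> ?C"
      moreover have "closed ?C"
        using fin by (intro closed_convex_cone_hull) (simp add: active_constraints_def)
      ultimately obtain c where c: "c \<bullet> y < 0" "\<And>x. x \<in> ?C \<Longrightarrow> 0 \<le> c \<bullet> x"
        using separating_hyperplane_closed_convex_cone convex_cone_convex_cone_hull by metis
      have "- c \<in> linearized_cone F a b z"
        using c(2)[OF hull_inc] by (force simp: linearized_cone_def inner_commute)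
      then have "eventually (\<lambda>t. z + t *\<^sub>R - c \<in> \<Theta>) (at_right 0)"
        by (rule eventually_ray_in_polyhedron[OF fin \<Theta> z])
      then have "eventually (\<lambda>t. 0 < t \<and> z + t *\<^sub>R - c \<in> \<Theta>) (at_right 0)"
        using eventually_at_right_less eventually_conj by blast
      then obtain t where t: "0 < t" "z + t *\<^sub>R - c \<in> \<Theta>"
        using eventually_happens' trivial_limit_at_right_real by blast
      then have "y \<bullet> (t *\<^sub>R - c) \<le> 0"
        using y z by (force simp: convex_normal_cone_def)
      with t(1) c(1) show False
        by (simp add: inner_commute zero_le_mult_iff)
    qed
  qed
qed

section \<open>Normals to \<open>g\<^sup>-\<^sup>1(\<Theta>)\<close> under metric subregularity\<close>

lemma infdist_lessE:
  assumes "infdist y A < e" "A \<noteq> {}"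
  obtains a where "a \<in> A" "dist y a < e"
  using assms cInf_lessD[of "dist y ` A" e] by (auto simp: infdist_notempty)

lemma regular_normal_inner_le_approx:
  fixes x v w :: "'a::euclidean_space"
  assumes v: "v \<in> regular_normal_cone \<Gamma> x" and \<epsilon>: "0 < \<epsilon>" "\<epsilon> \<le> 1"
    and dist: "eventually (\<lambda>t. infdist (x + t *\<^sub>R w) \<Gamma> \<le> t * (r + \<epsilon>)) (at_right 0)"
  shows "v \<bullet> w \<le> norm v * r + 2 * \<epsilon> * (norm w + \<bar>r\<bar> + 2 + norm v)"
proof -
  define M where "M = norm w + \<bar>r\<bar> + 2"
  have "x \<in> \<Gamma>"
    using v by (auto simp: regular_normal_cone_def split: if_splits)
  obtain \<delta> where \<delta>: "\<delta> > 0"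
    "\<And>u. u \<in> \<Gamma> \<Longrightarrow> norm (u - x) < \<delta> \<Longrightarrow> v \<bullet> (u - x) \<le> \<epsilon> * norm (u - x)"
    using v \<open>x \<in> \<Gamma>\<close> \<epsilon>(1) unfolding regular_normal_cone_def by auto
  have "((\<lambda>t. t * M) \<longlongrightarrow> 0) (at_right 0)"
    by (auto intro!: tendsto_eq_intros)
  then have "eventually (\<lambda>t. t * M < \<delta>) (at_right 0)"
    using \<delta>(1) order_tendstoD(2) by blast
  then have "eventually (\<lambda>t. 0 < t \<and> t * M < \<delta> \<and> infdist (x + t *\<^sub>R w) \<Gamma> \<le> t * (r + \<epsilon>))
      (at_right 0)"
    using dist eventually_at_right_less[of 0] by (auto intro: eventually_conj)
  then obtain t where t: "0 < t" "t * M < \<delta>" "infdist (x + t *\<^sub>R w) \<Gamma> \<le> t * (r + \<epsilon>)"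
    using eventually_happens' trivial_limit_at_right_real by blast
  have "infdist (x + t *\<^sub>R w) \<Gamma> < t * (r + 2 * \<epsilon>)"
    using t(3) mult_pos_pos[OF t(1) \<epsilon>(1)] by (simp add: algebra_simps)
  then obtain u where u: "u \<in> \<Gamma>" "dist (x + t *\<^sub>R w) u < t * (r + 2 * \<epsilon>)"
    using \<open>x \<in> \<Gamma>\<close> by (auto elim: infdist_lessE)
  have "norm (u - x) \<le> dist (x + t *\<^sub>R w) u + t * norm w"
    using norm_triangle_ineq[of "u - (x + t *\<^sub>R w)" "t *\<^sub>R w"] t(1)
    by (simp add: dist_norm norm_minus_commute)
  also have "\<dots> \<le> t * M"
  proof -
    have "t * (r + 2 * \<epsilon>) \<le> t * (\<bar>r\<bar> + 2)"
      using \<epsilon> t(1) by (intro mult_left_mono) auto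
    with u(2) show ?thesis by (simp add: M_def algebra_simps)
  qed
  finally have ux: "norm (u - x) \<le> t * M" .
  have "t * (v \<bullet> w) = v \<bullet> (u - x) + v \<bullet> (x + t *\<^sub>R w - u)"
    by (simp add: algebra_simps)
  also have "\<dots> \<le> \<epsilon> * (t * M) + norm v * (t * (r + 2 * \<epsilon>))"
  proof (rule add_mono)
    show "v \<bullet> (u - x) \<le> \<epsilon> * (t * M)"
      using \<delta>(2)[OF u(1)] ux t(2) \<epsilon>(1) by (smt (verit) mult_left_mono)
    show "v \<bullet> (x + t *\<^sub>R w - u) \<le> norm v * (t * (r + 2 * \<epsilon>))"
      using norm_cauchy_schwarz[of v "x + t *\<^sub>R w - u"] u(2)
      by (smt (verit) dist_norm mult_left_mono norm_ge_zero)
  qed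
  also have "\<dots> \<le> t * (norm v * r + 2 * \<epsilon> * (M + norm v))"
    using \<epsilon> t(1) by (simp add: M_def algebra_simps)
  finally show ?thesis
    using t(1) by (simp add: M_def)
qed

lemma regular_normal_inner_le:
  fixes x v w :: "'a::euclidean_space"
  assumes v: "v \<in> regular_normal_cone \<Gamma> x"
    and dist: "\<And>\<epsilon>. 0 < \<epsilon> \<Longrightarrow> eventually (\<lambda>t. infdist (x + t *\<^sub>R w) \<Gamma> \<le> t * (r + \<epsilon>)) (at_right 0)"
  shows "v \<bullet> w \<le> norm v * r"
proof (rule field_le_epsilon)
  fix e :: real assume "0 < e"
  define M where "M = norm w + \<bar>r\<bar> + 2 + norm v"
  have "0 < M"
    unfolding M_def using norm_ge_zero[of w] norm_ge_zero[of v] abs_ge_zero[of r] by linarith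
  define \<epsilon> where "\<epsilon> = min 1 (e / (2 * M))"
  have "0 < \<epsilon>" "\<epsilon> \<le> 1" "2 * \<epsilon> * M \<le> e"
    using \<open>0 < e\<close> \<open>0 < M\<close> by (auto simp: \<epsilon>_def min_def field_simps)
  with regular_normal_inner_le_approx[OF v _ _ dist, of \<epsilon>] show "v \<bullet> w \<le> norm v * r + e"
    by (simp add: M_def)
qed

lemma mscq_infdist_along_direction:
  fixes g :: "'a::euclidean_space \<Rightarrow> 'b::euclidean_space"
  assumes dg: "(g has_derivative D) (at x)"
    and U: "open U" "x \<in> U" and "0 \<le> \<kappa>"
    and ms: "\<forall>x\<in>U. infdist x {z. g z \<in> \<Theta>} \<le> \<kappa> * infdist (g x) \<Theta>"
    and p: "eventually (\<lambda>t. g x + t *\<^sub>R p \<in> \<Theta>) (at_right 0)"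
    and "0 < \<epsilon>"
  shows "eventually (\<lambda>t. infdist (x + t *\<^sub>R w) {z. g z \<in> \<Theta>} \<le> t * (\<kappa> * norm (D w - p) + \<epsilon>))
    (at_right 0)"
proof -
  define \<epsilon>' where "\<epsilon>' = \<epsilon> / (\<kappa> * norm w + 1)"
  have "0 < \<kappa> * norm w + 1"
    using \<open>0 \<le> \<kappa>\<close> by (simp add: add_nonneg_pos)
  then have "0 < \<epsilon>'" and \<epsilon>': "\<kappa> * (\<epsilon>' * norm w) \<le> \<epsilon>"
    using \<open>0 < \<epsilon>\<close> by (auto simp: \<epsilon>'_def field_simps)
  have lin: "linear D"
    using dg by (simp add: has_derivative_bounded_linear bounded_linear.linear)
  obtain d where d: "d > 0"
    "\<And>y. norm (y - x) < d \<Longrightarrow> norm (g y - g x - D (y - x)) \<le> \<epsilon>' * norm (y - x)"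
    using dg \<open>0 < \<epsilon>'\<close> unfolding has_derivative_at_alt by blast
  have to_x: "((\<lambda>t. x + t *\<^sub>R w) \<longlongrightarrow> x) (at_right 0)"
    by (auto intro!: tendsto_eq_intros)
  have "((\<lambda>t. t * norm w) \<longlongrightarrow> 0) (at_right 0)"
    by (auto intro!: tendsto_eq_intros)
  then have "eventually (\<lambda>t. t * norm w < d) (at_right 0)"
    using d(1) order_tendstoD(2) by blast
  moreover have "eventually (\<lambda>t. x + t *\<^sub>R w \<in> U) (at_right 0)"
    using topological_tendstoD[OF to_x U] .
  ultimately have "eventually (\<lambda>t. 0 < t \<and> t * norm w < d \<and> x + t *\<^sub>R w \<in> U
      \<and> g x + t *\<^sub>R p \<in> \<Theta>) (at_right 0)"
    using p eventually_at_right_less[of 0] by eventually_elim auto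
  then show ?thesis
  proof eventually_elim
    case (elim t)
    then have rem: "norm (g (x + t *\<^sub>R w) - g x - t *\<^sub>R D w) \<le> \<epsilon>' * (t * norm w)"
      using d(2)[of "x + t *\<^sub>R w"] linear_scale[OF lin] by simp
    have "infdist (g (x + t *\<^sub>R w)) \<Theta> \<le> dist (g (x + t *\<^sub>R w)) (g x + t *\<^sub>R p)"
      using elim by (intro infdist_le) auto
    also have "\<dots> = norm ((g (x + t *\<^sub>R w) - g x - t *\<^sub>R D w) + t *\<^sub>R (D w - p))"
      by (simp add: dist_norm algebra_simps)
    also have "\<dots> \<le> \<epsilon>' * (t * norm w) + t * norm (D w - p)"
      using norm_triangle_ineq[of "g (x + t *\<^sub>R w) - g x - t *\<^sub>R D w" "t *\<^sub>R (D w - p)"] rem elim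
      by simp
    finally have "\<kappa> * infdist (g (x + t *\<^sub>R w)) \<Theta> \<le> \<kappa> * (\<epsilon>' * (t * norm w) + t * norm (D w - p))"
      using \<open>0 \<le> \<kappa>\<close> by (rule mult_left_mono)
    also have "\<dots> = t * (\<kappa> * (\<epsilon>' * norm w) + \<kappa> * norm (D w - p))"
      by (simp add: algebra_simps)
    also have "\<dots> \<le> t * (\<kappa> * norm (D w - p) + \<epsilon>)"
      using \<epsilon>' elim by (intro mult_left_mono) auto
    finally show ?case
      using ms elim by (meson order_trans)
  qed
qed

lemma closest_point_convex_cone:
  fixes K :: "'a::euclidean_space set"
  assumes K: "closed K" "convex_cone K"
  shows "closest_point K u \<in> K" "u - closest_point K u \<in> polar_cone K"
    "(u - closest_point K u) \<bullet> closest_point K u = 0"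
proof -
  define p where "p = closest_point K u"
  have "0 \<in> K" and scale: "\<And>x s. x \<in> K \<Longrightarrow> 0 \<le> s \<Longrightarrow> s *\<^sub>R x \<in> K" and "convex K"
    using K(2) convex_cone_iff[of K] by (auto simp: convex_cone_def)
  then show "p \<in> K"
    unfolding p_def using closest_point_in_set[OF K(1)] by blast
  have dot: "(u - p) \<bullet> (k - p) \<le> 0" if "k \<in> K" for k
    unfolding p_def by (rule closest_point_dot[OF \<open>convex K\<close> K(1) that])
  \<comment> \<open>Testing the projection inequality with \<open>k = 0\<close> and \<open>k = 2 p\<close>.\<close>
  show "(u - p) \<bullet> p = 0"
    using dot[OF \<open>0 \<in> K\<close>] dot[OF scale[OF \<open>p \<in> K\<close>, of 2]] by (simp add: algebra_simps)
  with dot show "u - p \<in> polar_cone K"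
    by (auto simp: polar_cone_def inner_diff_right)
qed

lemma adjoint_representation_of_distance_bound:
  fixes A :: "'a::euclidean_space \<Rightarrow> 'b::euclidean_space"
  assumes A: "linear A" and K: "closed K" "convex_cone K" and "0 \<le> R"
    and bound: "\<And>w p. p \<in> K \<Longrightarrow> v \<bullet> w \<le> R * norm (A w - p)"
  shows "\<exists>y\<in>polar_cone K. norm y \<le> R \<and> v = adjoint A y"
proof -
  define C where "C = adjoint A ` (polar_cone K \<inter> cball 0 R)"
  have adj: "linear (adjoint A)"
    by (rule adjoint_linear[OF A])
  have "v \<in> C"
  proof (rule ccontr)
    assume "v \<notin> C"
    moreover have "compact C"
      unfolding C_def using adj
      by (intro compact_continuous_image linear_continuous_on linear_conv_bounded_linear[THEN iffD1]
          closed_Int_compact compact_cball closed_polar_cone)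
    moreover have "convex C"
      unfolding C_def by (intro convex_linear_image adj convex_Int convex_polar_cone convex_cball)
    ultimately obtain c e where ce: "c \<bullet> v < e" "\<forall>x\<in>C. e < c \<bullet> x"
      using separating_hyperplane_closed_point compact_imp_closed by metis
    have "0 \<in> C"
      unfolding C_def using \<open>0 \<le> R\<close>
      by (auto simp: polar_cone_def linear_0[OF adj] intro!: image_eqI[of _ _ 0])
    with ce have "v \<bullet> (- c) > 0"
      by (fastforce simp: inner_commute)
    define u where "u = A (- c)"
    define p where "p = closest_point K u"
    have "p \<in> K" "u - p \<in> polar_cone K" "(u - p) \<bullet> p = 0"
      using closest_point_convex_cone[OF K, of u] by (simp_all add: p_def)
    show False
    proof (cases "u = p")
      case True
      then show False
        using bound[OF \<open>p \<in> K\<close>, of "- c"] \<open>v \<bullet> (- c) > 0\<close> by (simp add: u_def)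
    next
      case False
      define y where "y = (R / norm (u - p)) *\<^sub>R (u - p)"
      have "y \<in> polar_cone K"
        using \<open>u - p \<in> polar_cone K\<close>
        using \<open>0 \<le> R\<close> by (auto simp: polar_cone_def y_def intro!: divide_nonpos_nonneg mult_nonneg_nonpos)
      moreover have "norm y = R"
        using False \<open>0 \<le> R\<close> by (simp add: y_def)
      ultimately have "e < c \<bullet> adjoint A y"
        using ce(2) by (auto simp: C_def)
      also have "c \<bullet> adjoint A y = - (u \<bullet> y)"
        using adjoint_works[OF A, of c y] linear_neg[OF A, of c] by (simp add: u_def)
      also have "u \<bullet> y = R * norm (u - p)"
      proof -
        have "u \<bullet> (u - p) = (u - p) \<bullet> (u - p)"
          using \<open>(u - p) \<bullet> p = 0\<close> by (simp add: inner_diff_left inner_commute)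
        with False show ?thesis
          by (simp add: y_def power2_norm_eq_inner[symmetric] power2_eq_square)
      qed
      finally show False
        using bound[OF \<open>p \<in> K\<close>, of "- c"] ce(1) by (simp add: u_def inner_commute)
    qed
  qed
  then show ?thesis
    by (auto simp: C_def)
qed

lemma mscq_regular_normal_representation:
  fixes g :: "'a::euclidean_space \<Rightarrow> 'b::euclidean_space" and Dgx :: "'a \<Rightarrow>\<^sub>L 'b"
  assumes dg: "(g has_derivative blinfun_apply Dgx) (at x)"
    and fin: "finite F" and \<Theta>: "\<Theta> = {x. \<forall>h\<in>F. a h \<bullet> x \<le> b h}" and "g x \<in> \<Theta>"
    and U: "open U" "x \<in> U" and "0 \<le> \<kappa>"
    and ms: "\<forall>x\<in>U. infdist x {z. g z \<in> \<Theta>} \<le> \<kappa> * infdist (g x) \<Theta>"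
    and v: "v \<in> regular_normal_cone {z. g z \<in> \<Theta>} x"
  shows "\<exists>y\<in>polar_cone (linearized_cone F a b (g x)). norm y \<le> \<kappa> * norm v \<and> v = adjoint Dgx y"
proof (rule adjoint_representation_of_distance_bound)
  show "linear (blinfun_apply Dgx)"
    by (simp add: blinfun.bounded_linear_right bounded_linear.linear)
  show "v \<bullet> w \<le> \<kappa> * norm v * norm (Dgx w - p)" if "p \<in> linearized_cone F a b (g x)" for w p
  proof -
    have "eventually (\<lambda>t. g x + t *\<^sub>R p \<in> \<Theta>) (at_right 0)"
      using eventually_ray_in_polyhedron[OF fin \<Theta> \<open>g x \<in> \<Theta>\<close> that] .
    then have "v \<bullet> w \<le> norm v * (\<kappa> * norm (Dgx w - p))"
      by (intro regular_normal_inner_le[OF v] mscq_infdist_along_direction[OF dg U \<open>0 \<le> \<kappa>\<close> ms])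
    then show ?thesis
      by (simp add: algebra_simps)
  qed
qed (use \<open>0 \<le> \<kappa>\<close> in \<open>auto simp: closed_linearized_cone convex_cone_linearized_cone\<close>)

lemma eventually_convex_normal_cone_subset:
  fixes a :: "'c \<Rightarrow> 'b::euclidean_space"
  assumes fin: "finite F" and \<Theta>: "\<Theta> = {x. \<forall>h\<in>F. a h \<bullet> x \<le> b h}" and "z \<in> \<Theta>"
  shows "eventually (\<lambda>z'. z' \<in> \<Theta> \<longrightarrow> convex_normal_cone \<Theta> z' \<subseteq> convex_normal_cone \<Theta> z) (nhds z)"
proof -
  have "eventually (\<lambda>z'. a h \<bullet> z' \<noteq> b h) (nhds z)" if "h \<in> F - active_constraints F a b z" for h
  proof (rule tendsto_imp_eventually_ne)
    show "((\<lambda>z'. a h \<bullet> z') \<longlongrightarrow> a h \<bullet> z) (nhds z)"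
      by (intro tendsto_intros filterlim_ident)
    show "a h \<bullet> z \<noteq> b h"
      using that by (simp add: active_constraints_def)
  qed
  then have "eventually (\<lambda>z'. \<forall>h\<in>F - active_constraints F a b z. a h \<bullet> z' \<noteq> b h) (nhds z)"
    using fin by (simp add: eventually_ball_finite)
  then show ?thesis
  proof eventually_elim
    case (elim z')
    then have "active_constraints F a b z' \<subseteq> active_constraints F a b z"
      by (auto simp: active_constraints_def)
    then show ?case
      using convex_normal_cone_polyhedron[OF fin \<Theta>] \<open>z \<in> \<Theta>\<close> by (auto intro!: hull_mono image_mono)
  qed
qed

lemma adjoint_representation_limit:
  fixes D :: "nat \<Rightarrow> 'a::euclidean_space \<Rightarrow>\<^sub>L 'b::euclidean_space"
  assumes "closed S" and "\<And>k. ys k \<in> S" and "\<And>k. norm (ys k) \<le> \<kappa> * norm (vs k)"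
    and vs: "\<And>k. vs k = adjoint (D k) (ys k)"
    and "D \<longlonglongrightarrow> D0" and "vs \<longlonglongrightarrow> v"
  shows "\<exists>y\<in>S. v = adjoint D0 y"
proof -
  obtain B where B: "\<And>k. norm (vs k) \<le> B"
    using convergent_imp_bounded[OF \<open>vs \<longlonglongrightarrow> v\<close>] by (auto simp: bounded_iff)
  have "norm (ys k) \<le> \<bar>\<kappa>\<bar> * B" for k
  proof -
    have "norm (ys k) \<le> \<bar>\<kappa>\<bar> * norm (vs k)"
      by (rule order_trans[OF \<open>norm (ys k) \<le> \<kappa> * norm (vs k)\<close> mult_right_mono[OF abs_ge_self norm_ge_zero]])
    also have "\<dots> \<le> \<bar>\<kappa>\<bar> * B"
      using B by (simp add: mult_left_mono)
    finally show ?thesis .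
  qed
  then have "bounded (range ys)"
    unfolding bounded_iff by blast
  then obtain y r where r: "strict_mono r" and ys: "(ys \<circ> r) \<longlonglongrightarrow> y"
    using bounded_imp_convergent_subsequence by blast
  have "y \<in> S"
    using closed_sequentially[OF \<open>closed S\<close>, of "ys \<circ> r"] ys \<open>\<And>k. ys k \<in> S\<close> by auto
  moreover have "e \<bullet> v = e \<bullet> adjoint D0 y" for e
  proof -
    have lin: "linear (blinfun_apply L)" for L :: "'a \<Rightarrow>\<^sub>L 'b"
      by (simp add: blinfun.bounded_linear_right bounded_linear.linear)
    have "(\<lambda>k. e \<bullet> vs (r k)) \<longlonglongrightarrow> e \<bullet> v"
      using LIMSEQ_subseq_LIMSEQ[OF \<open>vs \<longlonglongrightarrow> v\<close> r] by (intro tendsto_intros) (simp add: o_def)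
    moreover have "(\<lambda>k. e \<bullet> vs (r k)) = (\<lambda>k. D (r k) e \<bullet> ys (r k))"
      using vs adjoint_works[OF lin] by metis
    moreover have "(\<lambda>k. D (r k) e \<bullet> ys (r k)) \<longlonglongrightarrow> D0 e \<bullet> y"
      using LIMSEQ_subseq_LIMSEQ[OF \<open>D \<longlonglongrightarrow> D0\<close> r] ys by (intro tendsto_intros) (simp_all add: o_def)
    ultimately have "e \<bullet> v = D0 e \<bullet> y"
      using LIMSEQ_unique by metis
    then show ?thesis
      using adjoint_works[OF lin] by metis
  qed
  ultimately show ?thesis
    using vector_eq_ldot by blast
qed

lemma mscq_limiting_normal_representation:
  fixes g :: "'a::euclidean_space \<Rightarrow> 'b::euclidean_space" and Dg :: "'a \<Rightarrow> ('a \<Rightarrow>\<^sub>L 'b)"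
  assumes dg: "\<And>x. (g has_derivative blinfun_apply (Dg x)) (at x)" and "isCont Dg xbar"
    and fin: "finite F" and \<Theta>: "\<Theta> = {x. \<forall>h\<in>F. a h \<bullet> x \<le> b h}"
    and "g xbar \<in> \<Theta>" and "MSCQ g \<Theta> xbar"
    and "vbar \<in> limiting_normal_cone {x. g x \<in> \<Theta>} xbar"
  shows "\<exists>y\<in>convex_normal_cone \<Theta> (g xbar). vbar = adjoint (Dg xbar) y"
proof -
  define C where "C = convex_normal_cone \<Theta> (g xbar)"
  obtain xs vs where xs: "\<And>k. g (xs k) \<in> \<Theta>" "xs \<longlonglongrightarrow> xbar"
    and vs: "\<And>k. vs k \<in> regular_normal_cone {x. g x \<in> \<Theta>} (xs k)" "vs \<longlonglongrightarrow> vbar"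
    using assms(5,7) unfolding limiting_normal_cone_def by auto
  obtain U \<kappa> where U: "open U" "xbar \<in> U" "0 < \<kappa>"
    and ms: "\<forall>x\<in>U. infdist x {z. g z \<in> \<Theta>} \<le> \<kappa> * infdist (g x) \<Theta>"
    using \<open>MSCQ g \<Theta> xbar\<close> unfolding MSCQ_def by blast
  have "(\<lambda>k. g (xs k)) \<longlonglongrightarrow> g xbar"
    using has_derivative_continuous[OF dg] xs(2) by (simp add: continuous_at isCont_tendsto_compose)
  with eventually_convex_normal_cone_subset[OF fin \<Theta> \<open>g xbar \<in> \<Theta>\<close>]
  have "eventually (\<lambda>k. convex_normal_cone \<Theta> (g (xs k)) \<subseteq> C) sequentially"
    using xs(1) by (auto simp: C_def dest: eventually_compose_filterlim)
  then have "eventually (\<lambda>k. xs k \<in> U \<and> convex_normal_cone \<Theta> (g (xs k)) \<subseteq> C) sequentially"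
    using topological_tendstoD[OF xs(2) U(1,2)] by (intro eventually_conj)
  then obtain N where N: "\<And>k. N \<le> k \<Longrightarrow> xs k \<in> U \<and> convex_normal_cone \<Theta> (g (xs k)) \<subseteq> C"
    unfolding eventually_sequentially by blast
  have "\<exists>y. y \<in> C \<and> norm y \<le> \<kappa> * norm (vs (k + N)) \<and> vs (k + N) = adjoint (Dg (xs (k + N))) y"
    for k
  proof -
    obtain y where y: "y \<in> polar_cone (linearized_cone F a b (g (xs (k + N))))"
      "norm y \<le> \<kappa> * norm (vs (k + N))" "vs (k + N) = adjoint (Dg (xs (k + N))) y"
      using mscq_regular_normal_representation[OF dg fin \<Theta> xs(1) U(1) _ _ ms vs(1)] N U(3)
      by (meson le_add2 less_imp_le)
    moreover have "convex_normal_cone \<Theta> (g (xs (k + N))) \<subseteq> C"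
      using N[of "k + N"] by simp
    ultimately show ?thesis
      using polar_linearized_cone_subset_normal_cone[OF \<Theta> xs(1)[of "k + N"]] by blast
  qed
  then obtain ys where ys: "\<And>k. ys k \<in> C" "\<And>k. norm (ys k) \<le> \<kappa> * norm (vs (k + N))"
    "\<And>k. vs (k + N) = adjoint (Dg (xs (k + N))) (ys k)"
    by metis
  moreover have "closed C"
    by (simp add: C_def closed_convex_normal_cone)
  moreover have "(\<lambda>k. Dg (xs (k + N))) \<longlonglongrightarrow> Dg xbar"
    using isCont_tendsto_compose[OF \<open>isCont Dg xbar\<close> LIMSEQ_ignore_initial_segment[OF xs(2)]] .
  ultimately have "\<exists>y\<in>C. vbar = adjoint (Dg xbar) y"
    using adjoint_representation_limit[of C ys \<kappa> "\<lambda>k. vs (k + N)" "\<lambda>k. Dg (xs (k + N))"] ys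
      LIMSEQ_ignore_initial_segment[OF vs(2)] by blast
  then show ?thesis
    by (simp add: C_def)
qed

section \<open>The second-order sign condition\<close>

lemma inner_second_order_mean_value:
  fixes g :: "'a::euclidean_space \<Rightarrow> 'b::euclidean_space"
    and Dg :: "'a \<Rightarrow> ('a \<Rightarrow>\<^sub>L 'b)" and D2g :: "'a \<Rightarrow> ('a \<Rightarrow>\<^sub>L ('a \<Rightarrow>\<^sub>L 'b))"
  assumes dg: "\<And>x. (g has_derivative blinfun_apply (Dg x)) (at x)"
    and d2g: "\<And>x. (Dg has_derivative blinfun_apply (D2g x)) (at x)"
  obtains \<xi> where "0 < \<xi>" "\<xi> < 1"
    "y \<bullet> g (x + h) = y \<bullet> g x + y \<bullet> Dg x h + (y \<bullet> D2g (x + \<xi> *\<^sub>R h) h h) / 2"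
proof -
  define f where "f = (\<lambda>m::nat. if m = 0 then (\<lambda>s. y \<bullet> g (x + s *\<^sub>R h))
     else if m = 1 then (\<lambda>s. y \<bullet> Dg (x + s *\<^sub>R h) h) else (\<lambda>s. y \<bullet> D2g (x + s *\<^sub>R h) h h))"
  have line: "((\<lambda>s. x + s *\<^sub>R h) has_derivative (\<lambda>s. s *\<^sub>R h)) (at s)" for s
    by (auto intro!: derivative_eq_intros)
  have "((\<lambda>s. y \<bullet> g (x + s *\<^sub>R h)) has_real_derivative (y \<bullet> Dg (x + s *\<^sub>R h) h)) (at s)" for s
    using has_derivative_compose[OF line dg]
    by (auto intro!: derivative_eq_intros simp: has_field_derivative_def o_def blinfun.scaleR_right
        mult_commute_abs)
  moreover have "((\<lambda>s. y \<bullet> Dg (x + s *\<^sub>R h) h) has_real_derivative (y \<bullet> D2g (x + s *\<^sub>R h) h h)) (at s)" for s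
    using has_derivative_compose[OF line d2g]
    by (auto intro!: derivative_eq_intros simp: has_field_derivative_def o_def blinfun.scaleR_right
        scaleR_blinfun.rep_eq mult_commute_abs)
  ultimately have "\<forall>m t. m < 2 \<and> 0 \<le> t \<and> t \<le> 1 \<longrightarrow> (f m has_real_derivative f (Suc m) t) (at t)"
    by (auto simp: f_def less_2_cases_iff)
  then obtain t where "0 < t" "t < 1"
    "f 0 1 = (\<Sum>m<2. (f m 0 / fact m) * (1 - 0)^m) + (f 2 t / fact 2) * (1 - 0)^2"
    using Taylor_up[of 2 f "f 0" 0 1 0] by auto
  then show ?thesis
    by (intro that[of t]) (simp_all add: f_def numeral_2_eq_2)
qed

lemma second_order_tangent_nonpos:
  fixes g :: "'a::euclidean_space \<Rightarrow> 'b::euclidean_space"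
    and Dg :: "'a \<Rightarrow> ('a \<Rightarrow>\<^sub>L 'b)" and D2g :: "'a \<Rightarrow> ('a \<Rightarrow>\<^sub>L ('a \<Rightarrow>\<^sub>L 'b))"
  assumes dg: "\<And>x. (g has_derivative blinfun_apply (Dg x)) (at x)"
    and d2g: "\<And>x. (Dg has_derivative blinfun_apply (D2g x)) (at x)"
    and "isCont D2g xbar"
    and y: "y \<in> convex_normal_cone \<Theta> (g xbar)" and "adjoint (Dg xbar) y = 0"
    and "v \<in> tangent_cone {x. g x \<in> \<Theta>} xbar"
  shows "y \<bullet> D2g xbar v v \<le> 0"
proof -
  obtain t ws where t: "\<And>k. 0 < t k" "\<And>k. g (xbar + t k *\<^sub>R ws k) \<in> \<Theta>" "t \<longlonglongrightarrow> 0"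
    and ws: "ws \<longlonglongrightarrow> v"
    using \<open>v \<in> tangent_cone _ _\<close> unfolding tangent_cone_def by auto
  have y_Dg: "y \<bullet> Dg xbar e = 0" for e
    using adjoint_works[of "blinfun_apply (Dg xbar)" e y] \<open>adjoint (Dg xbar) y = 0\<close>
    by (simp add: blinfun.bounded_linear_right bounded_linear.linear inner_commute)
  \<comment> \<open>Along \<open>t k *\<^sub>R ws k\<close> the first-order term vanishes, so the Taylor remainder carries the sign.\<close>
  have "\<exists>\<xi>. 0 < \<xi> \<and> \<xi> < 1 \<and> y \<bullet> D2g (xbar + (\<xi> * t k) *\<^sub>R ws k) (ws k) (ws k) \<le> 0" for k
  proof -
    obtain \<xi> where \<xi>: "0 < \<xi>" "\<xi> < 1"
      "y \<bullet> g (xbar + t k *\<^sub>R ws k) = y \<bullet> g xbar + y \<bullet> Dg xbar (t k *\<^sub>R ws k)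
         + (y \<bullet> D2g (xbar + \<xi> *\<^sub>R (t k *\<^sub>R ws k)) (t k *\<^sub>R ws k) (t k *\<^sub>R ws k)) / 2"
      using inner_second_order_mean_value[OF dg d2g] by blast
    have "y \<bullet> (g (xbar + t k *\<^sub>R ws k) - g xbar) \<le> 0"
      using y t(2) by (auto simp: convex_normal_cone_def split: if_splits)
    then have "t k * t k * (y \<bullet> D2g (xbar + (\<xi> * t k) *\<^sub>R ws k) (ws k) (ws k)) \<le> 0"
      using \<xi>(3) y_Dg by (simp add: inner_diff_right blinfun.scaleR_right scaleR_blinfun.rep_eq)
    then show ?thesis
      using \<xi>(1,2) t(1)[of k] by (auto simp: mult_le_0_iff)
  qed
  then obtain \<xi> where \<xi>: "\<And>k. 0 < \<xi> k" "\<And>k. \<xi> k < 1"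
    "\<And>k. y \<bullet> D2g (xbar + (\<xi> k * t k) *\<^sub>R ws k) (ws k) (ws k) \<le> 0"
    by metis
  have "norm (\<xi> k * t k) \<le> t k" for k
    using mult_right_mono[of "\<xi> k" 1 "t k"] \<xi>(1,2)[of k] t(1)[of k] by simp
  then have "(\<lambda>k. \<xi> k * t k) \<longlonglongrightarrow> 0"
    by (intro Lim_null_comparison[OF _ t(3)] always_eventually) auto
  then have "(\<lambda>k. xbar + (\<xi> k * t k) *\<^sub>R ws k) \<longlonglongrightarrow> xbar"
    using tendsto_add[OF tendsto_const tendsto_scaleR[OF _ ws]] by fastforce
  then have "(\<lambda>k. y \<bullet> D2g (xbar + (\<xi> k * t k) *\<^sub>R ws k) (ws k) (ws k)) \<longlonglongrightarrow> y \<bullet> D2g xbar v v"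
    by (intro tendsto_intros ws isCont_tendsto_compose[OF \<open>isCont D2g xbar\<close>])
  then show ?thesis
    using \<xi>(3) by (intro tendsto_upperbound) (auto intro: always_eventually)
qed

section \<open>Linear programs over finitely generated cones\<close>

lemma bdd_above_closed_cone_slice:
  fixes C :: "('a::real_normed_vector \<times> real) set"
  assumes "closed C" "convex_cone C" "(0, 1) \<notin> C"
  shows "bdd_above {s. (v, s) \<in> C}"
proof (rule ccontr)
  \<comment> \<open>Otherwise \<open>(0, 1) = lim (v / s, 1)\<close> along an unbounded sequence of slice points \<open>(v, s)\<close>.\<close>
  assume "\<not> bdd_above {s. (v, s) \<in> C}"
  then have "\<exists>s. (v, s) \<in> C \<and> real (Suc n) < s" for n
    unfolding bdd_above_def by (meson mem_Collect_eq not_le)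
  then obtain s where s: "\<And>n. (v, s n) \<in> C" "\<And>n. real (Suc n) < s n"
    by metis
  have "(inverse (s n) *\<^sub>R v, 1) \<in> C" for n
  proof -
    have "0 < s n"
      using s(2)[of n] by (smt (verit) of_nat_0_le_iff)
    with s(1)[of n] show ?thesis
      using convex_cone_scaleR[OF assms(2), of "inverse (s n)" "(v, s n)"] by simp
  qed
  moreover have "(\<lambda>n. inverse (s n)) \<longlonglongrightarrow> 0"
  proof (rule Lim_null_comparison[OF always_eventually LIMSEQ_inverse_real_of_nat], intro allI)
    fix n
    have "0 < real (Suc n)" by simp
    with s(2)[of n] show "norm (inverse (s n)) \<le> inverse (real (Suc n))"
      by (simp add: le_imp_inverse_le)
  qed
  then have "(\<lambda>n. (inverse (s n) *\<^sub>R v, 1)) \<longlonglongrightarrow> (0 *\<^sub>R v, 1)"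
    by (intro tendsto_intros)
  ultimately have "(0, 1) \<in> C"
    using closed_sequentially[OF \<open>closed C\<close>] by force
  with assms(3) show False ..
qed

lemma linear_max_on_finite_cone:
  fixes A :: "'b::euclidean_space \<Rightarrow> 'a::euclidean_space" and q :: "'b \<Rightarrow> real"
  assumes "finite G" "linear A" "linear q"
    and kernel: "\<And>y. y \<in> convex_cone hull G \<Longrightarrow> A y = 0 \<Longrightarrow> q y \<le> 0"
    and "v \<in> A ` (convex_cone hull G)"
  obtains y where "y \<in> convex_cone hull G" "A y = v"
    "\<And>z. z \<in> convex_cone hull G \<Longrightarrow> A z = v \<Longrightarrow> q z \<le> q y"
proof -
  define \<phi> where "\<phi> y = (A y, q y)" for y
  define C where "C = \<phi> ` (convex_cone hull G)"
  define S where "S = {s. (v, s) \<in> C}"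
  have "linear \<phi>"
    using \<open>linear A\<close> \<open>linear q\<close> by (auto simp: \<phi>_def linear_iff)
  then have C: "C = convex_cone hull (\<phi> ` G)"
    unfolding C_def by (rule convex_cone_hull_linear_image[symmetric])
  then have "closed C"
    using \<open>finite G\<close> by (simp add: closed_convex_cone_hull)
  moreover have "S = Pair v -` C"
    by (auto simp: S_def)
  ultimately have "closed S"
    by (simp add: continuous_closed_vimage)
  have "S \<noteq> {}"
    using \<open>v \<in> A ` _\<close> by (auto simp: S_def C_def \<phi>_def)
  have "(0, 1) \<notin> C"
    using kernel by (force simp: C_def \<phi>_def)
  then have "bdd_above S"
    unfolding S_def using \<open>closed C\<close> convex_cone_convex_cone_hull C
    by (intro bdd_above_closed_cone_slice) simp_all
  then have "Sup S \<in> S"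
    using closed_contains_Sup[OF \<open>S \<noteq> {}\<close> _ \<open>closed S\<close>] by blast
  then obtain y where "y \<in> convex_cone hull G" "A y = v" "q y = Sup S"
    by (auto simp: S_def C_def \<phi>_def)
  moreover have "q z \<le> Sup S" if "z \<in> convex_cone hull G" "A z = v" for z
    using that \<open>bdd_above S\<close> by (intro cSup_upper) (auto simp: S_def C_def \<phi>_def)
  ultimately show ?thesis
    using that by metis
qed

theorem lemma8p2:
  fixes g :: "'a::euclidean_space \<Rightarrow> 'b::euclidean_space"
    and Dg :: "'a \<Rightarrow> ('a \<Rightarrow>\<^sub>L 'b)"
    and D2g :: "'a \<Rightarrow> ('a \<Rightarrow>\<^sub>L ('a \<Rightarrow>\<^sub>L 'b))"
    and \<Theta> :: "'b set" and xbar vbar :: 'a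
  assumes poly: "polyhedron \<Theta>" and ne: "\<Theta> \<noteq> {}" and conv: "convex \<Theta>"
    and dg: "\<And>x. (g has_derivative blinfun_apply (Dg x)) (at x)"
    and d2g: "\<And>x. (Dg has_derivative blinfun_apply (D2g x)) (at x)"
    and d2g_cont: "continuous_on UNIV D2g"
    and xbar_in: "g xbar \<in> \<Theta>"
    and mscq: "MSCQ g \<Theta> xbar"
    and vbar: "vbar \<in> limiting_normal_cone {x. g x \<in> \<Theta>} xbar"
  shows "\<forall>v \<in> critical_cone {x. g x \<in> \<Theta>} xbar vbar.
           (let P = {y. vbar = adjoint (blinfun_apply (Dg xbar)) y
                        \<and> y \<in> convex_normal_cone \<Theta> (g xbar)};
                q = (\<lambda>y. y \<bullet> blinfun_apply (blinfun_apply (D2g xbar) v) v)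
            in {y \<in> P. \<forall>z\<in>P. q z \<le> q y} \<noteq> {})"
  \<comment> \<open>\<open>ne\<close> and \<open>conv\<close> are redundant: they follow from \<open>xbar_in\<close> and \<open>poly\<close>.\<close>
proof
  fix v assume "v \<in> critical_cone {x. g x \<in> \<Theta>} xbar vbar"
  then have v: "v \<in> tangent_cone {x. g x \<in> \<Theta>} xbar"
    by (simp add: critical_cone_def)
  obtain F :: "'b set set" and a b where fin: "finite F" and \<Theta>: "\<Theta> = {x. \<forall>h\<in>F. a h \<bullet> x \<le> b h}"
    using polyhedron_as_inequalities[OF poly] .
  define G where "G = a ` active_constraints F a b (g xbar)"
  have N: "convex_normal_cone \<Theta> (g xbar) = convex_cone hull G"
    unfolding G_def by (rule convex_normal_cone_polyhedron[OF fin \<Theta> xbar_in])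
  have "isCont Dg xbar" "isCont D2g xbar"
    using has_derivative_continuous[OF d2g] d2g_cont
    by (simp_all add: continuous_at continuous_on_eq_continuous_at)
  obtain y where "y \<in> convex_cone hull G" "adjoint (Dg xbar) y = vbar"
    "\<And>z. z \<in> convex_cone hull G \<Longrightarrow> adjoint (Dg xbar) z = vbar \<Longrightarrow>
       z \<bullet> D2g xbar v v \<le> y \<bullet> D2g xbar v v"
  proof (rule linear_max_on_finite_cone)
    show "finite G"
      using fin by (simp add: G_def active_constraints_def)
    show "linear (adjoint (Dg xbar))"
      by (simp add: adjoint_linear blinfun.bounded_linear_right bounded_linear.linear)
    show "linear (\<lambda>y. y \<bullet> D2g xbar v v)"
      by (simp add: linearI inner_add_left)
    show "z \<bullet> D2g xbar v v \<le> 0" if "z \<in> convex_cone hull G" "adjoint (Dg xbar) z = 0" for z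
      using second_order_tangent_nonpos[OF dg d2g \<open>isCont D2g xbar\<close> _ _ v] that N by blast
    show "vbar \<in> adjoint (Dg xbar) ` (convex_cone hull G)"
      using mscq_limiting_normal_representation[OF dg \<open>isCont Dg xbar\<close> fin \<Theta> xbar_in mscq vbar] N
      by auto
  qed blast
  then show "let P = {y. vbar = adjoint (blinfun_apply (Dg xbar)) y
                        \<and> y \<in> convex_normal_cone \<Theta> (g xbar)};
                q = (\<lambda>y. y \<bullet> blinfun_apply (blinfun_apply (D2g xbar) v) v)
            in {y \<in> P. \<forall>z\<in>P. q z \<le> q y} \<noteq> {}"
    unfolding Let_def N by auto
qed

end
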